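(* Let $F_1,F_2\subset\mathbb R^d$ be solid sets providing a normal decomposition of $F=F_1\cup F_2$, and let $C=\partial F_1\cup\partial F_2$. Then (i) $\Theta_{d-1}\big(C,\{(x,u)\in\mathrm{Nor}(C):x\in\partial F\cap\partial F_1\cap\partial F_2\}\big)=0$; (ii) $\frac1\varepsilon\mu_d\big((\partial F_1\triangle\partial F_2)_\varepsilon\cap(\partial F_1\cap\partial F_2)_\varepsilon\big)\to0$ as $\varepsilon\to0^+$; (iii) $\frac1\varepsilon\mu_d\big(((\partial F_1)_\varepsilon\cap(\partial F_2)_\varepsilon)\setminus(\partial F_1\cap\partial F_2)_\varepsilon\big)\to0$ as $\varepsilon\to0^+$.
   Context: $\mu_d$ is Lebesgue measure on $\mathbb R^d$. For a nonempty closed $G\subset\mathbb R^d$: $d_G(z)=\min_{x\in G}\|z-x\|$, $G_\varepsilon=\{z:d_G(z)\le\varepsilon\}$ (with $\emptyset_\varepsilon=\emptyset$); the skeleton $S_G$ is the set of points with more than one nearest point in $G$, $p_G(z)$ the unique nearest point for $z\notin S_G$, $u_G(z)=(z-p_G(z))/d_G(z)$ for $z\notin S_G\cup G$; $\mathrm{Nor}(G)=\{(p_G(z),u_G(z)):z\notin S_G\cup G\}$, and $r_G(x,u)=\sup\{s>0:p_G(x+su)=x\}$. The support measures $\Theta_0(G,\cdot),\dots,\Theta_{d-1}(G,\cdot)$ are the uniquely determined (locally finite, signed) reach measures on $\mathrm{Nor}(G)$ satisfying the local Steiner formula $\int_{\mathbb R^d\setminus G}f\,d\mu_d=\sum_{j=1}^d\binom{d-1}{j-1}\int_{\mathrm{Nor}(G)}\int_0^{r_G(x,u)}f(x+tu)t^{j-1}dt\,\Theta_{d-j}(G,d(x,u))$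 for bounded measurable compactly supported $f$; $\Theta_{d-1}(G,\cdot)$ is a nonnegative measure. A set is solid if it is compact, equals the closure of its interior and its boundary has Lebesgue measure $0$. Solid sets $F_1,F_2$ provide a normal decomposition of $F=F_1\cup F_2$ if $F_1\cap F_2\subset\partial F_1\cap\partial F_2$ and $\frac1\varepsilon\mu_d\big((\partial F)_\varepsilon\cap(\partial F_1)_\varepsilon\cap(\partial F_2)_\varepsilon\big)\to0$ as $\varepsilon\to0^+$. *)

theory Defs
  imports "HOL-Analysis.Analysis"
begin

definition par_set :: "'a::euclidean_space set \<Rightarrow> real \<Rightarrow> 'a set" where
  "par_set G \<epsilon> = (if G = {} then {} else {z. infdist z G \<le> \<epsilon>})"

definition unique_nearest :: "'a::euclidean_space set \<Rightarrow> 'a \<Rightarrow> 'a \<Rightarrow> bool" where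
  "unique_nearest G z x \<longleftrightarrow> x \<in> G \<and> (\<forall>y\<in>G. dist z x \<le> dist z y) \<and>
      (\<forall>y\<in>G. dist z y = dist z x \<longrightarrow> y = x)"

definition Nor :: "'a::euclidean_space set \<Rightarrow> ('a \<times> 'a) set" where
  "Nor G = {(x, (z - x) /\<^sub>R norm (z - x)) | z x. z \<notin> G \<and> unique_nearest G z x}"

definition reach_fun :: "'a::euclidean_space set \<Rightarrow> 'a \<Rightarrow> 'a \<Rightarrow> ereal" where
  "reach_fun G x u = Sup {ereal s | s. s > 0 \<and> unique_nearest G (x + s *\<^sub>R u) x}"

definition solid :: "'a::euclidean_space set \<Rightarrow> bool" where
  "solid F \<longleftrightarrow> compact F \<and> closure (interior F) = F \<and> emeasure lborel (frontier F) = 0"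

definition normal_decomposition :: "'a::euclidean_space set \<Rightarrow> 'a set \<Rightarrow> bool" where
  "normal_decomposition F1 F2 \<longleftrightarrow> solid F1 \<and> solid F2 \<and>
     F1 \<inter> F2 \<subseteq> frontier F1 \<inter> frontier F2 \<and>
     ((\<lambda>\<epsilon>. measure lborel (par_set (frontier (F1 \<union> F2)) \<epsilon> \<inter> par_set (frontier F1) \<epsilon>
                    \<inter> par_set (frontier F2) \<epsilon>) / \<epsilon>) \<longlongrightarrow> 0) (at_right 0)"

text \<open>A signed measure on pairs is represented by its Jordan decomposition (P, N):
  two mutually singular (nonnegative) Borel measures, Theta = P - N.\<close>
definition reach_measure :: "'a::euclidean_space set \<Rightarrow> ('a \<times> 'a) measure \<Rightarrow> bool" where
  "reach_measure G M \<longleftrightarrow> sets M = sets borel \<and>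
     (\<exists>B\<in>sets borel. B \<subseteq> Nor G \<and> emeasure M (UNIV - B) = 0) \<and>
     (\<forall>K \<delta>. compact K \<and> \<delta> > 0 \<longrightarrow>
        (\<exists>B\<in>sets borel. {(x, u) \<in> Nor G. x \<in> K \<and> ereal \<delta> \<le> reach_fun G x u} \<subseteq> B
                         \<and> emeasure M B < \<infinity>))"

definition steiner_integrand ::
  "'a::euclidean_space set \<Rightarrow> ('a \<Rightarrow> real) \<Rightarrow> nat \<Rightarrow> 'a \<times> 'a \<Rightarrow> real" where
  "steiner_integrand G f j = (\<lambda>(x, u).
      LINT t : {t. 0 < t \<and> ereal t < reach_fun G x u} | lborel. f (x + t *\<^sub>R u) * t ^ (j - 1))"

text \<open>Theta i = (P, N) represents the support measure Theta_i(G, .) = P - N, i = 0..d-1,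
  characterised by the local Steiner formula.\<close>
definition support_measures ::
  "'a::euclidean_space set \<Rightarrow> (nat \<Rightarrow> ('a \<times> 'a) measure \<times> ('a \<times> 'a) measure) \<Rightarrow> bool" where
  "support_measures G \<Theta> \<longleftrightarrow>
     (\<forall>i < DIM('a). reach_measure G (fst (\<Theta> i)) \<and> reach_measure G (snd (\<Theta> i)) \<and>
        (\<exists>S\<in>sets borel. emeasure (fst (\<Theta> i)) (UNIV - S) = 0 \<and> emeasure (snd (\<Theta> i)) S = 0)) \<and>
     (\<forall>f :: 'a \<Rightarrow> real. f \<in> borel_measurable borel \<and> bounded (range f) \<and> bounded {z. f z \<noteq> 0}
        \<longrightarrow> (\<forall>j\<in>{1..DIM('a)}.
               integrable (fst (\<Theta> (DIM('a) - j))) (steiner_integrand G f j) \<and>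
               integrable (snd (\<Theta> (DIM('a) - j))) (steiner_integrand G f j)) \<and>
            (LINT z : (UNIV - G) | lborel. f z) =
              (\<Sum>j = 1..DIM('a). real (DIM('a) - 1 choose (j - 1)) *
                 ((\<integral>p. steiner_integrand G f j p \<partial>fst (\<Theta> (DIM('a) - j))) -
                  (\<integral>p. steiner_integrand G f j p \<partial>snd (\<Theta> (DIM('a) - j))))))"

end

theory Submission
  imports Defs
begin

text \<open>Fix a compact set \<open>T\<close> of base points, a Borel set \<open>S\<close> of normal pairs and \<open>\<delta> > 0\<close>, and let
  \<open>\<Phi>\<close> consist of the pairs in \<open>S\<close> with base point in \<open>T\<close> and reach at least \<open>\<delta>\<close>. For \<open>e < \<delta>\<close> the
  points within distance \<open>e\<close> of \<open>C\<close> whose projection and normal lie in \<open>\<Phi>\<close> have, by the local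
  Steiner formula, volume \<open>\<Sum>j. (d-1 choose j-1) e\<^sup>j/j \<Theta>\<^sub>d\<^sub>-\<^sub>j(C,\<Phi>)\<close>. These points lie in the
  \<open>e\<close>-parallel set of \<open>T\<close>; for \<open>T = \<partial>F \<inter> \<partial>F\<^sub>1 \<inter> \<partial>F\<^sub>2\<close> its volume is \<open>o(e)\<close> by the
  normal decomposition, so the constant term \<open>\<Theta>\<^sub>d\<^sub>-\<^sub>1(C,\<Phi>)\<close> vanishes. Choosing \<open>S\<close> as the positive
  or negative set of the Jordan decomposition and letting \<open>\<delta> \<rightarrow> 0\<close> gives (i). The sets in (ii) and
  (iii) lie in the same triple intersection of parallel sets, since \<open>\<partial>F\<^sub>1 - \<partial>F\<^sub>2\<close> and
  \<open>\<partial>F\<^sub>2 - \<partial>F\<^sub>1\<close> are contained in \<open>\<partial>F\<close>.\<close>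

lemma closed_par_set: "closed (par_set G e)"
  unfolding par_set_def by (auto intro!: closed_Collect_le continuous_intros)

lemma compact_par_set:
  fixes G :: "'a::euclidean_space set"
  assumes "compact G"
  shows "compact (par_set G e)"
proof (cases "G = {}")
  case True
  then show ?thesis by (simp add: par_set_def)
next
  case False
  obtain R where R: "\<And>x. x \<in> G \<Longrightarrow> norm x \<le> R"
    using assms compact_imp_bounded bounded_iff by metis
  have "par_set G e \<subseteq> cball 0 (R + e)"
  proof
    fix z assume "z \<in> par_set G e"
    then have z: "infdist z G \<le> e" using False by (simp add: par_set_def)
    obtain x where x: "x \<in> G" "infdist z G = dist z x"
      using infdist_attains_inf[OF compact_imp_closed[OF assms] False] by blast
    have "norm z \<le> norm x + dist z x" by (metis dist_norm norm_triangle_sub add.commute)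
    then show "z \<in> cball 0 (R + e)" using R[OF x(1)] x z by simp
  qed
  then show ?thesis
    using closed_par_set by (meson bounded_cball bounded_subset compact_eq_bounded_closed)
qed

lemma par_set_memI:
  assumes "x \<in> G" "dist z x \<le> e"
  shows "z \<in> par_set G e"
  using assms infdist_le2[of x G z e] by (auto simp: par_set_def)

lemma par_set_mono:
  assumes "G \<subseteq> H"
  shows "par_set G e \<subseteq> par_set H e"
proof (cases "G = {}")
  case False
  then show ?thesis
    using assms by (auto simp: par_set_def intro: order_trans[OF infdist_mono[OF assms]])
qed (simp add: par_set_def)

lemma par_set_sym_diff_Int_subset:
  assumes "A - B \<subseteq> D" "B - A \<subseteq> D"
  shows "par_set ((A - B) \<union> (B - A)) e \<inter> par_set (A \<inter> B) e
           \<subseteq> par_set D e \<inter> par_set A e \<inter> par_set B e"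
  using par_set_mono[of "(A - B) \<union> (B - A)" D e] par_set_mono[of "A \<inter> B" A e]
    par_set_mono[of "A \<inter> B" B e] assms by blast

lemma par_set_Int_diff_subset:
  fixes A B D :: "'a::euclidean_space set"
  assumes "closed A" "A - B \<subseteq> D"
  shows "(par_set A e \<inter> par_set B e) - par_set (A \<inter> B) e
           \<subseteq> par_set D e \<inter> par_set A e \<inter> par_set B e"
proof
  fix z assume z: "z \<in> (par_set A e \<inter> par_set B e) - par_set (A \<inter> B) e"
  then have "A \<noteq> {}" and zA: "infdist z A \<le> e"
    by (auto simp: par_set_def split: if_splits)
  then obtain a where a: "a \<in> A" "infdist z A = dist z a"
    using infdist_attains_inf[OF assms(1)] by blast
  have "a \<notin> B"
    using z a zA par_set_memI[of a "A \<inter> B" z e] by auto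
  then have "z \<in> par_set D e" using a zA assms(2) by (intro par_set_memI[of a]) auto
  then show "z \<in> par_set D e \<inter> par_set A e \<inter> par_set B e" using z by blast
qed

lemma tendsto_measure_ratio_subset:
  fixes A B :: "real \<Rightarrow> 'a::euclidean_space set"
  assumes "\<And>e. A e \<in> sets lborel" "\<And>e. compact (B e)" "\<And>e. A e \<subseteq> B e"
    and "((\<lambda>e. measure lborel (B e) / e) \<longlongrightarrow> 0) (at_right 0)"
  shows "((\<lambda>e. measure lborel (A e) / e) \<longlongrightarrow> 0) (at_right 0)"
proof (rule tendsto_sandwich[OF _ _ tendsto_const assms(4)])
  have pos: "\<forall>\<^sub>F e in at_right (0::real). 0 < e" by (simp add: eventually_at_right_less)
  then show "\<forall>\<^sub>F e in at_right 0. 0 \<le> measure lborel (A e) / e"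
    by eventually_elim simp
  from pos show "\<forall>\<^sub>F e in at_right 0. measure lborel (A e) / e \<le> measure lborel (B e) / e"
    by eventually_elim (intro divide_right_mono measure_mono_fmeasurable fmeasurable_compact assms, auto)
qed

lemma frontier_diff_subset_frontier_Un:
  fixes F1 F2 :: "'a::real_normed_vector set"
  assumes "closed F1" "closed F2" "F1 \<inter> F2 \<subseteq> frontier F2"
  shows "frontier F1 - frontier F2 \<subseteq> frontier (F1 \<union> F2)"
proof
  fix x assume x: "x \<in> frontier F1 - frontier F2"
  have xF1: "x \<in> F1" using x assms(1) frontier_subset_closed by blast
  have xF2: "x \<notin> F2" using x xF1 assms(3) by blast
  have "x \<notin> interior (F1 \<union> F2)"
  proof
    assume "x \<in> interior (F1 \<union> F2)"
    moreover have "open (interior (F1 \<union> F2) - F2)" using assms(2) by auto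
    moreover have "interior (F1 \<union> F2) - F2 \<subseteq> F1" using interior_subset by blast
    ultimately have "x \<in> interior F1" using xF2 by (metis DiffI interiorI)
    then show False using x by (simp add: frontier_def)
  qed
  then show "x \<in> frontier (F1 \<union> F2)" using xF1 closure_subset by (auto simp: frontier_def)
qed

definition unique_proj_dom :: "'a::euclidean_space set \<Rightarrow> 'a set" where
  "unique_proj_dom C = {z. \<exists>x. unique_nearest C z x}"

text \<open>The value \<open>0\<close> off \<open>unique_proj_dom C\<close> is arbitrary; it only makes \<open>metric_proj C\<close> a total
  Borel function.\<close>

definition metric_proj :: "'a::euclidean_space set \<Rightarrow> 'a \<Rightarrow> 'a" where
  "metric_proj C z = (if z \<in> unique_proj_dom C then THE x. unique_nearest C z x else 0)"

lemma unique_nearest_unique: "unique_nearest C z x \<Longrightarrow> unique_nearest C z y \<Longrightarrow> x = y"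
  unfolding unique_nearest_def by (meson antisym)

lemma unique_nearest_iff_metric_proj:
  "unique_nearest C z x \<longleftrightarrow> z \<in> unique_proj_dom C \<and> metric_proj C z = x"
proof
  assume x: "unique_nearest C z x"
  then have "(THE x. unique_nearest C z x) = x"
    using unique_nearest_unique by blast
  with x show "z \<in> unique_proj_dom C \<and> metric_proj C z = x"
    by (auto simp: unique_proj_dom_def metric_proj_def)
next
  assume z: "z \<in> unique_proj_dom C \<and> metric_proj C z = x"
  then obtain y where y: "unique_nearest C z y" by (auto simp: unique_proj_dom_def)
  then have "(THE x. unique_nearest C z x) = y"
    using unique_nearest_unique by blast
  with y z show "unique_nearest C z x" by (auto simp: metric_proj_def)
qed

lemma unique_nearest_metric_proj:
  "z \<in> unique_proj_dom C \<Longrightarrow> unique_nearest C z (metric_proj C z)"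
  by (simp add: unique_nearest_iff_metric_proj)

lemma unique_nearest_infdist: "unique_nearest C z x \<Longrightarrow> infdist z C = dist z x"
proof -
  assume x: "unique_nearest C z x"
  then have "x \<in> C" "\<forall>y\<in>C. dist z x \<le> dist z y" by (auto simp: unique_nearest_def)
  then show ?thesis
    by (intro antisym infdist_le) (auto simp: infdist_def intro!: cINF_greatest)
qed

lemma unique_nearest_eqI:
  assumes "unique_nearest C z p" "x \<in> C" "dist z x \<le> infdist z C"
  shows "x = p"
  using assms unique_nearest_infdist[OF assms(1)] infdist_le[OF assms(2), of z]
  by (auto simp: unique_nearest_def)

lemma closed_points_with_nearest_in:
  fixes K C :: "'a::euclidean_space set"
  assumes "compact K"
  shows "closed {z. \<exists>x. x \<in> K \<and> dist z x \<le> infdist z C}"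
proof -
  have "closed {p :: 'a \<times> 'a. dist (snd p) (fst p) \<le> infdist (snd p) C}"
    by (intro closed_Collect_le continuous_intros continuous_on_infdist)
  from closed_compact_projection[OF assms this] show ?thesis by simp
qed

lemma closed_points_with_two_nearest_in:
  fixes K :: "('a::euclidean_space \<times> 'a) set" and C :: "'a set"
  assumes "compact K"
  shows "closed {z. \<exists>x y. (x, y) \<in> K \<and> dist z x \<le> infdist z C \<and> dist z y \<le> infdist z C}"
proof -
  have "closed {p :: ('a \<times> 'a) \<times> 'a. dist (snd p) (fst (fst p)) \<le> infdist (snd p) C \<and>
        dist (snd p) (snd (fst p)) \<le> infdist (snd p) C}"
    by (intro closed_Collect_conj closed_Collect_le continuous_intros continuous_on_infdist)
  from closed_compact_projection[OF assms this] show ?thesis by simp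
qed

text \<open>The skeleton of a nonempty compact set is the countable union of the closed sets
  \<open>skeleton_part C n\<close>, which makes the metric projection Borel measurable.\<close>

definition skeleton_part :: "'a::euclidean_space set \<Rightarrow> nat \<Rightarrow> 'a set" where
  "skeleton_part C n = {z. \<exists>x y. x \<in> C \<and> y \<in> C \<and> 1 / Suc n \<le> dist x y \<and>
      dist z x \<le> infdist z C \<and> dist z y \<le> infdist z C}"

lemma closed_skeleton_part:
  fixes C :: "'a::euclidean_space set"
  assumes "compact C"
  shows "closed (skeleton_part C n)"
proof -
  let ?K = "(C \<times> C) \<inter> {p. 1 / Suc n \<le> dist (fst p) (snd p)}"
  have "closed {p :: 'a \<times> 'a. 1 / Suc n \<le> dist (fst p) (snd p)}"
    by (intro closed_Collect_le continuous_intros)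
  then have K: "compact ?K"
    using assms by (intro compact_Int_closed compact_Times)
  have eq: "skeleton_part C n =
      {z. \<exists>x y. (x, y) \<in> ?K \<and> dist z x \<le> infdist z C \<and> dist z y \<le> infdist z C}"
    by (auto simp: skeleton_part_def)
  show ?thesis
    unfolding eq using K by (rule closed_points_with_two_nearest_in)
qed

lemma unique_proj_dom_eq:
  fixes C :: "'a::euclidean_space set"
  assumes C: "compact C" "C \<noteq> {}"
  shows "unique_proj_dom C = - (\<Union>n. skeleton_part C n)"
proof (intro set_eqI iffI)
  fix z assume "z \<in> unique_proj_dom C"
  then have u: "unique_nearest C z (metric_proj C z)" by (rule unique_nearest_metric_proj)
  have "z \<notin> skeleton_part C n" for n
  proof
    assume "z \<in> skeleton_part C n"
    then obtain x y where xy: "x \<in> C" "y \<in> C" "1 / Suc n \<le> dist x y"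
        "dist z x \<le> infdist z C" "dist z y \<le> infdist z C"
      unfolding skeleton_part_def by auto
    have "x = metric_proj C z" "y = metric_proj C z"
      using unique_nearest_eqI[OF u] xy by auto
    then show False using xy(3) by simp
  qed
  then show "z \<in> - (\<Union>n. skeleton_part C n)" by blast
next
  fix z assume z: "z \<in> - (\<Union>n. skeleton_part C n)"
  obtain x where x: "x \<in> C" "infdist z C = dist z x"
    using infdist_attains_inf[OF compact_imp_closed[OF C(1)] C(2)] by blast
  have "unique_nearest C z x"
    unfolding unique_nearest_def
  proof (intro conjI ballI impI)
    fix y assume y: "y \<in> C"
    then show "dist z x \<le> dist z y" using x infdist_le by metis
    assume e: "dist z y = dist z x"
    show "y = x"
    proof (rule ccontr)
      assume "y \<noteq> x"
      then obtain n where "inverse (real (Suc n)) < dist x y"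
        using reals_Archimedean by (metis dist_pos_lt)
      then have "1 / Suc n \<le> dist x y" by (simp add: inverse_eq_divide)
      then have "z \<in> skeleton_part C n"
        using x y e unfolding skeleton_part_def by (intro CollectI exI[of _ x] exI[of _ y]) auto
      then show False using z by blast
    qed
  qed (fact x)
  then show "z \<in> unique_proj_dom C" unfolding unique_proj_dom_def by blast
qed

lemma unique_proj_dom_borel:
  fixes C :: "'a::euclidean_space set"
  assumes "compact C" "C \<noteq> {}"
  shows "unique_proj_dom C \<in> sets borel"
  unfolding unique_proj_dom_eq[OF assms] using closed_skeleton_part[OF assms(1)]
  by (auto intro!: borel_comp sets.countable_UN borel_closed)

lemma vimage_metric_proj_closed:
  assumes "closed F"
  shows "metric_proj C -` F = (unique_proj_dom C \<inter> {z. \<exists>x. x \<in> C \<inter> F \<and> dist z x \<le> infdist z C})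
           \<union> (if 0 \<in> F then - unique_proj_dom C else {})"
proof (intro set_eqI iffI)
  fix z assume z: "z \<in> metric_proj C -` F"
  show "z \<in> (unique_proj_dom C \<inter> {z. \<exists>x. x \<in> C \<inter> F \<and> dist z x \<le> infdist z C})
           \<union> (if 0 \<in> F then - unique_proj_dom C else {})"
  proof (cases "z \<in> unique_proj_dom C")
    case True
    then have u: "unique_nearest C z (metric_proj C z)" by (rule unique_nearest_metric_proj)
    then show ?thesis
      using True z unique_nearest_infdist[OF u] by (auto simp: unique_nearest_def)
  qed (use z in \<open>auto simp: metric_proj_def\<close>)
next
  fix z assume z: "z \<in> (unique_proj_dom C \<inter> {z. \<exists>x. x \<in> C \<inter> F \<and> dist z x \<le> infdist z C})
           \<union> (if 0 \<in> F then - unique_proj_dom C else {})"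
  show "z \<in> metric_proj C -` F"
  proof (cases "z \<in> unique_proj_dom C")
    case True
    then obtain x where "x \<in> C" "x \<in> F" "dist z x \<le> infdist z C"
      using z by (auto split: if_splits)
    then show ?thesis
      using unique_nearest_eqI[OF unique_nearest_metric_proj[OF True]] by auto
  qed (use z in \<open>auto simp: metric_proj_def split: if_splits\<close>)
qed

lemma metric_proj_borel:
  fixes C :: "'a::euclidean_space set"
  assumes C: "compact C" "C \<noteq> {}"
  shows "metric_proj C \<in> borel_measurable borel"
proof (rule borel_measurableI)
  fix S :: "'a set" assume "open S"
  then have cl: "closed (- S)" by auto
  then have "compact (C \<inter> - S)" using C by (simp add: compact_Int_closed)
  then have "{z. \<exists>x. x \<in> C \<inter> - S \<and> dist z x \<le> infdist z C} \<in> sets borel"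
    by (intro borel_closed closed_points_with_nearest_in)
  then have "metric_proj C -` (- S) \<in> sets borel"
    unfolding vimage_metric_proj_closed[OF cl] using unique_proj_dom_borel[OF C]
    by (intro sets.Un sets.Int) auto
  then have "- (metric_proj C -` (- S)) \<in> sets borel" by (rule borel_comp)
  then show "metric_proj C -` S \<inter> space borel \<in> sets borel" by (simp add: vimage_Compl)
qed

lemma unique_nearest_ray_segment:
  assumes u: "unique_nearest C (x + s *\<^sub>R u) x" and t: "0 \<le> t" "t \<le> s"
  shows "unique_nearest C (x + t *\<^sub>R u) x"
proof -
  have near: "\<forall>y\<in>C. s * norm u \<le> dist (x + s *\<^sub>R u) y"
    and uq: "\<forall>y\<in>C. dist (x + s *\<^sub>R u) y = s * norm u \<longrightarrow> y = x"
    using u t by (auto simp: unique_nearest_def dist_norm)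
  have "(x + s *\<^sub>R u) - (x + t *\<^sub>R u) = (s - t) *\<^sub>R u" by (simp add: algebra_simps)
  then have tri: "dist (x + s *\<^sub>R u) y \<le> (s - t) * norm u + dist (x + t *\<^sub>R u) y" for y
    using dist_triangle[of "x + s *\<^sub>R u" y "x + t *\<^sub>R u"] t by (simp add: dist_norm)
  have d: "dist (x + t *\<^sub>R u) x = t * norm u" using t by (simp add: dist_norm)
  show ?thesis
    unfolding unique_nearest_def
  proof (intro conjI ballI impI)
    show "x \<in> C" using u by (simp add: unique_nearest_def)
    fix y assume y: "y \<in> C"
    show "dist (x + t *\<^sub>R u) x \<le> dist (x + t *\<^sub>R u) y"
      using near[rule_format, OF y] tri[of y] d by (simp add: algebra_simps)
    assume "dist (x + t *\<^sub>R u) y = dist (x + t *\<^sub>R u) x"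
    then have "dist (x + s *\<^sub>R u) y = s * norm u"
      using near[rule_format, OF y] tri[of y] d by (simp add: algebra_simps)
    then show "y = x" using uq y by blast
  qed
qed

lemma Nor_D:
  assumes "(x, u) \<in> Nor C"
  shows "x \<in> C" "norm u = 1" "\<exists>s>0. unique_nearest C (x + s *\<^sub>R u) x"
proof -
  obtain z where z: "z \<notin> C" "unique_nearest C z x" "u = (z - x) /\<^sub>R norm (z - x)"
    using assms unfolding Nor_def by blast
  show "x \<in> C" using z by (simp add: unique_nearest_def)
  then have "z \<noteq> x" using z by auto
  then show "norm u = 1" "\<exists>s>0. unique_nearest C (x + s *\<^sub>R u) x"
    using z by (auto intro!: exI[of _ "norm (z - x)"])
qed

lemma unique_nearest_below_reach:
  assumes "ereal t < reach_fun C x u" "0 \<le> t"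
  shows "unique_nearest C (x + t *\<^sub>R u) x"
proof -
  obtain s where s: "unique_nearest C (x + s *\<^sub>R u) x" "t < s"
    using assms(1) unfolding reach_fun_def less_Sup_iff by auto
  then show ?thesis by (intro unique_nearest_ray_segment[OF s(1) assms(2)]) simp
qed

lemma reach_fun_geI:
  assumes "0 < d" "unique_nearest C (x + d *\<^sub>R u) x"
  shows "ereal d \<le> reach_fun C x u"
  unfolding reach_fun_def using assms by (intro Sup_upper) blast

definition reach_at_least :: "'a::euclidean_space set \<Rightarrow> real \<Rightarrow> ('a \<times> 'a) set" where
  "reach_at_least C d = {(x, u). unique_nearest C (x + d *\<^sub>R u) x}"

definition local_par_set :: "'a::euclidean_space set \<Rightarrow> ('a \<times> 'a) set \<Rightarrow> real \<Rightarrow> 'a set" where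
  "local_par_set C \<Phi> e = {z \<in> unique_proj_dom C - C. dist z (metric_proj C z) \<le> e \<and>
      (metric_proj C z, (z - metric_proj C z) /\<^sub>R norm (z - metric_proj C z)) \<in> \<Phi>}"

lemma reach_at_least_borel:
  fixes C :: "'a::euclidean_space set"
  assumes "compact C" "C \<noteq> {}"
  shows "reach_at_least C d \<in> sets borel"
proof -
  have [measurable]: "metric_proj C \<in> borel_measurable borel" "unique_proj_dom C \<in> sets borel"
    using assms by (rule metric_proj_borel unique_proj_dom_borel)+
  have "reach_at_least C d = {p \<in> space (borel \<Otimes>\<^sub>M borel).
      fst p + d *\<^sub>R snd p \<in> unique_proj_dom C \<and> metric_proj C (fst p + d *\<^sub>R snd p) = fst p}"
    by (auto simp: reach_at_least_def unique_nearest_iff_metric_proj space_pair_measure)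
  also have "\<dots> \<in> sets (borel \<Otimes>\<^sub>M borel)" by measurable
  finally show ?thesis unfolding borel_prod .
qed

lemma local_par_set_borel:
  fixes C :: "'a::euclidean_space set"
  assumes "compact C" "C \<noteq> {}" "\<Phi> \<in> sets borel"
  shows "local_par_set C \<Phi> e \<in> sets borel"
proof -
  have [measurable]: "metric_proj C \<in> borel_measurable borel" "unique_proj_dom C \<in> sets borel"
    "C \<in> sets borel" "\<Phi> \<in> sets borel"
    using assms by (auto intro: metric_proj_borel unique_proj_dom_borel borel_compact)
  have "local_par_set C \<Phi> e = {z \<in> space borel. z \<in> unique_proj_dom C \<and> z \<notin> C \<and>
      dist z (metric_proj C z) \<le> e \<and>
      (metric_proj C z, (z - metric_proj C z) /\<^sub>R norm (z - metric_proj C z)) \<in> \<Phi>}"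
    by (auto simp: local_par_set_def)
  also have "\<dots> \<in> sets borel" by measurable
  finally show ?thesis .
qed

lemma local_par_set_subset: "local_par_set C \<Phi> e \<subseteq> par_set (C \<inter> fst ` \<Phi>) e"
proof
  fix z assume z: "z \<in> local_par_set C \<Phi> e"
  then have "metric_proj C z \<in> C"
    using unique_nearest_metric_proj[of z C] by (auto simp: local_par_set_def unique_nearest_def)
  with z show "z \<in> par_set (C \<inter> fst ` \<Phi>) e"
    by (intro par_set_memI[of "metric_proj C z"]) (force simp: local_par_set_def)+
qed

lemma ray_in_local_par_set_iff:
  assumes xu: "(x, u) \<in> Nor C" and t: "0 < t" "ereal t < reach_fun C x u"
  shows "x + t *\<^sub>R u \<in> local_par_set C \<Phi> e \<longleftrightarrow> t \<le> e \<and> (x, u) \<in> \<Phi>"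
proof -
  have un: "unique_nearest C (x + t *\<^sub>R u) x" using unique_nearest_below_reach[OF t(2)] t by simp
  have u: "norm u = 1" using Nor_D[OF xu] by simp
  then have d: "dist (x + t *\<^sub>R u) x = t" using t by (simp add: dist_norm)
  have "x + t *\<^sub>R u \<notin> C"
    using un d t unfolding unique_nearest_def by force
  then show ?thesis
    using un d t u by (simp add: local_par_set_def unique_nearest_iff_metric_proj)
qed

lemma set_integral_power_Ioc:
  assumes "0 \<le> e" "1 \<le> j"
  shows "(LINT t:{0<..e}|lborel. (t::real) ^ (j - 1)) = e ^ j / j"
proof -
  have "(LINT t:{0<..e}|lborel. t ^ (j - 1)) = (LINT t:{0..e}|lborel. t ^ (j - 1))"
    using assms(1) by (simp add: interval_integral_Ioc[symmetric] interval_integral_Icc)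
  also have "\<dots> = (e ^ Suc (j - 1) - 0 ^ Suc (j - 1)) / Suc (j - 1)"
    unfolding set_lebesgue_integral_def real_scaleR_def
    by (subst mult.commute) (rule integral_power[OF assms(1)])
  also have "\<dots> = e ^ j / j" using assms by simp
  finally show ?thesis .
qed

lemma steiner_integrand_local_par_set:
  assumes xu: "(x, u) \<in> Nor C" and \<Phi>: "\<Phi> \<subseteq> reach_at_least C d"
    and e: "0 < e" "e < d" and j: "1 \<le> j"
  shows "steiner_integrand C (indicator (local_par_set C \<Phi> e)) j (x, u) = e ^ j / j * indicator \<Phi> (x, u)"
proof -
  let ?D = "{t. 0 < t \<and> ereal t < reach_fun C x u}"
  have pw: "indicator ?D t * (indicator (local_par_set C \<Phi> e) (x + t *\<^sub>R u) * t ^ (j - 1)) =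
      indicator \<Phi> (x, u) * (indicator {0<..e} t * t ^ (j - 1))" for t
  proof (cases "t \<in> ?D")
    case True
    then show ?thesis using ray_in_local_par_set_iff[OF xu] by (auto simp: indicator_def)
  next
    case False
    have "(x, u) \<notin> \<Phi> \<or> t \<notin> {0<..e}"
    proof (rule ccontr)
      assume "\<not> ?thesis"
      then have d: "ereal d \<le> reach_fun C x u" and "t \<in> {0<..e}"
        using \<Phi> e reach_fun_geI[of d C x u] by (auto simp: reach_at_least_def)
      have "ereal t < ereal d" using \<open>t \<in> {0<..e}\<close> e by simp
      then have "ereal t < reach_fun C x u" using d by (rule order.strict_trans2)
      then show False using False \<open>t \<in> {0<..e}\<close> by simp
    qed
    then show ?thesis using False by (auto simp: indicator_def)
  qed
  then have "steiner_integrand C (indicator (local_par_set C \<Phi> e)) j (x, u) =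
      indicator \<Phi> (x, u) * (LINT t:{0<..e}|lborel. t ^ (j - 1))"
    unfolding steiner_integrand_def set_lebesgue_integral_def real_scaleR_def
    by (simp only: pw case_prod_conv integral_mult_right_zero)
  then show ?thesis using set_integral_power_Ioc[of e j] e j by simp
qed

lemma sets_reach_measure: "reach_measure C M \<Longrightarrow> sets M = sets borel"
  by (simp add: reach_measure_def)

lemma reach_measure_AE_Nor:
  assumes "reach_measure C M"
  shows "AE p in M. p \<in> Nor C"
proof -
  obtain B where B: "B \<in> sets borel" "B \<subseteq> Nor C" "emeasure M (UNIV - B) = 0"
    using assms unfolding reach_measure_def by blast
  have "sets M = sets borel" using assms unfolding reach_measure_def by blast
  then have null: "UNIV - B \<in> null_sets M" and "space M = UNIV"
    using B sets_eq_imp_space_eq[of M borel] by (auto simp: null_sets_def)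
  show ?thesis by (rule AE_I'[OF null]) (use B \<open>space M = UNIV\<close> in auto)
qed

lemma reach_measure_finite:
  assumes M: "reach_measure C M" and \<Phi>: "\<Phi> \<in> sets borel" "\<Phi> \<subseteq> reach_at_least C d"
    and C: "compact C" and d: "0 < d"
  shows "emeasure M \<Phi> < \<infinity>"
proof -
  have sM: "sets M = sets borel" using M unfolding reach_measure_def by blast
  obtain B0 where B0: "B0 \<in> sets borel" "B0 \<subseteq> Nor C" "emeasure M (UNIV - B0) = 0"
    using M unfolding reach_measure_def by blast
  obtain B1 where B1: "B1 \<in> sets borel" "emeasure M B1 < \<infinity>"
      "{(x, u) \<in> Nor C. x \<in> C \<and> ereal d \<le> reach_fun C x u} \<subseteq> B1"
    using M C d unfolding reach_measure_def by blast
  have "\<Phi> \<subseteq> B1 \<union> (UNIV - B0)"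
  proof
    fix p assume p: "p \<in> \<Phi>"
    obtain x u where [simp]: "p = (x, u)" by fastforce
    have "unique_nearest C (x + d *\<^sub>R u) x" using p \<Phi>(2) by (auto simp: reach_at_least_def)
    then have "(x, u) \<in> Nor C \<Longrightarrow> (x, u) \<in> B1"
      using B1(3) Nor_D(1) reach_fun_geI[OF d] by blast
    then show "p \<in> B1 \<union> (UNIV - B0)" using B0(2) by auto
  qed
  then have "emeasure M \<Phi> \<le> emeasure M (B1 \<union> (UNIV - B0))"
    using B0 B1 sM by (intro emeasure_mono) auto
  also have "\<dots> \<le> emeasure M B1 + emeasure M (UNIV - B0)"
    using B0 B1 sM by (intro emeasure_subadditive) auto
  finally show ?thesis using B0 B1 by (simp add: order_le_less_trans)
qed

lemma integral_steiner_integrand_local_par_set: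
  assumes M: "reach_measure C M" and \<Phi>: "\<Phi> \<in> sets borel" "\<Phi> \<subseteq> reach_at_least C d"
    and e: "0 < e" "e < d" and j: "1 \<le> j"
    and int: "integrable M (steiner_integrand C (indicator (local_par_set C \<Phi> e)) j)"
  shows "integral\<^sup>L M (steiner_integrand C (indicator (local_par_set C \<Phi> e)) j) = e ^ j / j * measure M \<Phi>"
proof -
  have sM: "sets M = sets borel" using M unfolding reach_measure_def by blast
  have "AE p in M. steiner_integrand C (indicator (local_par_set C \<Phi> e)) j p = e ^ j / j * indicator \<Phi> p"
    using reach_measure_AE_Nor[OF M]
    by eventually_elim (auto simp: steiner_integrand_local_par_set[OF _ \<Phi>(2) e j])
  then have "integral\<^sup>L M (steiner_integrand C (indicator (local_par_set C \<Phi> e)) j) =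
      integral\<^sup>L M (\<lambda>p. e ^ j / j * indicator \<Phi> p)"
    using \<Phi>(1) sM by (intro integral_cong_AE borel_measurable_integrable[OF int]) auto
  also have "\<dots> = e ^ j / j * measure M \<Phi>"
    using sets_eq_imp_space_eq[OF sM] by simp
  finally show ?thesis .
qed

lemma support_measuresD:
  fixes C :: "'a::euclidean_space set"
  assumes "support_measures C \<Theta>" "i < DIM('a)"
  shows "reach_measure C (fst (\<Theta> i))" "reach_measure C (snd (\<Theta> i))"
    "\<exists>S\<in>sets borel. emeasure (fst (\<Theta> i)) (UNIV - S) = 0 \<and> emeasure (snd (\<Theta> i)) S = 0"
  using assms unfolding support_measures_def by auto

lemma volume_local_par_set:
  fixes C :: "'a::euclidean_space set"
  assumes C: "compact C" "C \<noteq> {}" and \<Theta>: "support_measures C \<Theta>"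
    and \<Phi>: "\<Phi> \<in> sets borel" "\<Phi> \<subseteq> reach_at_least C d" and e: "0 < e" "e < d"
  shows "measure lborel (local_par_set C \<Phi> e) =
    (\<Sum>j = 1..DIM('a). real (DIM('a) - 1 choose (j - 1)) * (e ^ j / j) *
        (measure (fst (\<Theta> (DIM('a) - j))) \<Phi> - measure (snd (\<Theta> (DIM('a) - j))) \<Phi>))"
proof -
  let ?E = "local_par_set C \<Phi> e"
  let ?f = "indicator ?E :: 'a \<Rightarrow> real"
  have E: "?E \<in> sets borel" using C \<Phi>(1) by (rule local_par_set_borel)
  have "?E \<subseteq> par_set C e"
    using local_par_set_subset par_set_mono[of "C \<inter> fst ` \<Phi>" C e] by blast
  then have "bounded ?E"
    using compact_par_set[OF C(1)] compact_imp_bounded bounded_subset by blast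
  moreover have "range ?f \<subseteq> {0, 1}" "{z. ?f z \<noteq> 0} = ?E" by (auto simp: indicator_def)
  ultimately have "?f \<in> borel_measurable borel" "bounded (range ?f)" "bounded {z. ?f z \<noteq> 0}"
    using E bounded_subset[of "{0, 1}"] by auto
  then have int: "\<forall>j\<in>{1..DIM('a)}. integrable (fst (\<Theta> (DIM('a) - j))) (steiner_integrand C ?f j) \<and>
        integrable (snd (\<Theta> (DIM('a) - j))) (steiner_integrand C ?f j)"
    and steiner: "(LINT z : (UNIV - C) | lborel. ?f z) =
        (\<Sum>j = 1..DIM('a). real (DIM('a) - 1 choose (j - 1)) *
          ((\<integral>p. steiner_integrand C ?f j p \<partial>fst (\<Theta> (DIM('a) - j))) -
           (\<integral>p. steiner_integrand C ?f j p \<partial>snd (\<Theta> (DIM('a) - j)))))"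
    using \<Theta> unfolding support_measures_def by blast+
  have "(\<lambda>z. indicator (UNIV - C) z *\<^sub>R ?f z) = ?f"
    by (auto simp: indicator_def local_par_set_def fun_eq_iff)
  then have "measure lborel ?E = (LINT z : (UNIV - C) | lborel. ?f z)"
    by (simp add: set_lebesgue_integral_def)
  also have "\<dots> = (\<Sum>j = 1..DIM('a). real (DIM('a) - 1 choose (j - 1)) * (e ^ j / j) *
        (measure (fst (\<Theta> (DIM('a) - j))) \<Phi> - measure (snd (\<Theta> (DIM('a) - j))) \<Phi>))"
    unfolding steiner
  proof (intro sum.cong refl)
    fix j assume j: "j \<in> {1..DIM('a)}"
    then have "reach_measure C (fst (\<Theta> (DIM('a) - j)))" "reach_measure C (snd (\<Theta> (DIM('a) - j)))"
      using support_measuresD[OF \<Theta>] by auto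
    then show "real (DIM('a) - 1 choose (j - 1)) *
          ((\<integral>p. steiner_integrand C ?f j p \<partial>fst (\<Theta> (DIM('a) - j))) -
           (\<integral>p. steiner_integrand C ?f j p \<partial>snd (\<Theta> (DIM('a) - j)))) =
        real (DIM('a) - 1 choose (j - 1)) * (e ^ j / j) *
        (measure (fst (\<Theta> (DIM('a) - j))) \<Phi> - measure (snd (\<Theta> (DIM('a) - j))) \<Phi>)"
      using int j by (simp add: integral_steiner_integrand_local_par_set[OF _ \<Phi> e] right_diff_distrib)
  qed
  finally show ?thesis .
qed

text \<open>By the local Steiner formula \<open>measure lborel (local_par_set C \<Phi> e) / e\<close> is, for small \<open>e\<close>,
  a polynomial in \<open>e\<close> whose constant term is the signed top support measure of \<open>\<Phi>\<close>.\<close>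

lemma support_measure_top_eq:
  fixes C :: "'a::euclidean_space set"
  assumes C: "compact C" "C \<noteq> {}" and \<Theta>: "support_measures C \<Theta>"
    and \<Phi>: "\<Phi> \<in> sets borel" "\<Phi> \<subseteq> reach_at_least C d" and d: "0 < d"
    and lim: "((\<lambda>e. measure lborel (local_par_set C \<Phi> e) / e) \<longlongrightarrow> 0) (at_right 0)"
  shows "measure (fst (\<Theta> (DIM('a) - 1))) \<Phi> = measure (snd (\<Theta> (DIM('a) - 1))) \<Phi>"
proof -
  define a where "a j = measure (fst (\<Theta> (DIM('a) - j))) \<Phi> - measure (snd (\<Theta> (DIM('a) - j))) \<Phi>" for j
  define g where "g e = (\<Sum>j = 1..DIM('a). real (DIM('a) - 1 choose (j - 1)) * (e ^ (j - 1) / j) * a j)"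
    for e :: real
  have "(g \<longlongrightarrow> g 0) (at_right 0)" unfolding g_def by (intro tendsto_intros) auto
  have "measure lborel (local_par_set C \<Phi> e) / e = g e" if "0 < e" "e < d" for e
  proof -
    have "c * (e ^ j / j) * b / e = c * (e ^ (j - 1) / j) * b" if "1 \<le> j" for j :: nat and b c
    proof -
      have "e ^ j = e * e ^ (j - 1)" using that by (simp add: power_eq_if)
      then show ?thesis using \<open>0 < e\<close> by simp
    qed
    then show ?thesis
      unfolding volume_local_par_set[OF C \<Theta> \<Phi> that] g_def a_def sum_divide_distrib
      by (intro sum.cong refl) auto
  qed
  then have "\<forall>\<^sub>F e in at_right 0. g e = measure lborel (local_par_set C \<Phi> e) / e"
    unfolding eventually_at_right_field using d by (intro exI[of _ d]) auto
  with \<open>(g \<longlongrightarrow> g 0) (at_right 0)\<close>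
  have "((\<lambda>e. measure lborel (local_par_set C \<Phi> e) / e) \<longlongrightarrow> g 0) (at_right 0)"
    by (rule Lim_transform_eventually)
  then have "g 0 = 0" by (rule tendsto_unique[OF trivial_limit_at_right_real _ lim])
  moreover have "g 0 = (\<Sum>j \<in> {1..DIM('a)}. if j = 1 then a 1 else 0)"
    unfolding g_def by (intro sum.cong) auto
  moreover have "1 \<in> {1..DIM('a)}" using DIM_positive[where 'a='a] by simp
  ultimately show ?thesis by (simp add: a_def)
qed

lemma support_measure_top_null:
  fixes C T :: "'a::euclidean_space set"
  assumes C: "compact C" and T: "compact T" and \<Theta>: "support_measures C \<Theta>"
    and lim: "((\<lambda>e. measure lborel (par_set T e) / e) \<longlongrightarrow> 0) (at_right 0)"
  shows "\<exists>B\<in>sets borel. {(x, u) \<in> Nor C. x \<in> T} \<subseteq> B \<and>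
           emeasure (fst (\<Theta> (DIM('a) - 1))) B = 0 \<and> emeasure (snd (\<Theta> (DIM('a) - 1))) B = 0"
proof (cases "C = {}")
  case True
  then have "Nor C = {}" using Nor_D(1) by fastforce
  then show ?thesis by (intro bexI[of _ "{}"]) auto
next
  case False
  let ?P = "fst (\<Theta> (DIM('a) - 1))" and ?N = "snd (\<Theta> (DIM('a) - 1))"
  have "DIM('a) - 1 < DIM('a)" by simp
  note \<Theta>_top = support_measuresD[OF \<Theta> this]
  from \<Theta>_top(3) obtain S where S: "S \<in> sets borel" "emeasure ?P (UNIV - S) = 0" "emeasure ?N S = 0"
    by (elim bexE conjE)
  have rm: "reach_measure C ?P" "reach_measure C ?N" by (fact \<Theta>_top)+
  then have sets: "sets ?P = sets borel" "sets ?N = sets borel" by (simp_all add: sets_reach_measure)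
  define \<Phi> where "\<Phi> S' k = S' \<inter> (T \<times> UNIV) \<inter> reach_at_least C (1 / Suc k)" for S' k
  have \<Phi>_borel: "\<Phi> S' k \<in> sets borel" if "S' \<in> sets borel" for S' k
  proof -
    have "T \<times> UNIV \<in> sets borel" by (intro borel_closed closed_Times compact_imp_closed T) auto
    then show ?thesis
      unfolding \<Phi>_def using that reach_at_least_borel[OF C False] by (intro sets.Int)
  qed
  have null: "\<Phi> S' k \<in> null_sets ?P \<and> \<Phi> S' k \<in> null_sets ?N"
    if S': "S' \<in> sets borel" "emeasure ?P S' = 0 \<or> emeasure ?N S' = 0" for S' k
  proof -
    have reach: "\<Phi> S' k \<subseteq> reach_at_least C (1 / Suc k)" by (auto simp: \<Phi>_def)
    have "C \<inter> fst ` \<Phi> S' k \<subseteq> T" by (auto simp: \<Phi>_def)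
    then have "local_par_set C (\<Phi> S' k) e \<subseteq> par_set T e" for e
      using local_par_set_subset[of C "\<Phi> S' k" e] par_set_mono by blast
    then have "((\<lambda>e. measure lborel (local_par_set C (\<Phi> S' k) e) / e) \<longlongrightarrow> 0) (at_right 0)"
      using local_par_set_borel[OF C False \<Phi>_borel[OF S'(1)]] compact_par_set[OF T]
      by (intro tendsto_measure_ratio_subset[OF _ _ _ lim]) auto
    then have eq: "measure ?P (\<Phi> S' k) = measure ?N (\<Phi> S' k)"
      by (intro support_measure_top_eq[OF C False \<Theta> \<Phi>_borel[OF S'(1)] reach]) auto
    have fin: "emeasure ?P (\<Phi> S' k) < \<infinity>" "emeasure ?N (\<Phi> S' k) < \<infinity>"
      using rm by (intro reach_measure_finite[OF _ \<Phi>_borel[OF S'(1)] reach C]; simp)+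
    have "\<Phi> S' k \<subseteq> S'" by (auto simp: \<Phi>_def)
    then have "emeasure ?P (\<Phi> S' k) \<le> emeasure ?P S'" "emeasure ?N (\<Phi> S' k) \<le> emeasure ?N S'"
      using S'(1) sets by (intro emeasure_mono; simp)+
    then have "measure ?P (\<Phi> S' k) = 0 \<or> measure ?N (\<Phi> S' k) = 0"
      using S'(2) by (auto simp: measure_def)
    then have "emeasure ?P (\<Phi> S' k) = 0" "emeasure ?N (\<Phi> S' k) = 0"
      using eq fin by (simp_all add: emeasure_eq_ennreal_measure)
    then show ?thesis using \<Phi>_borel[OF S'(1)] sets by (simp add: null_sets_def)
  qed
  define B where "B = (\<Union>k. \<Phi> S k) \<union> (\<Union>k. \<Phi> (UNIV - S) k)"
  have "{(x, u) \<in> Nor C. x \<in> T} \<subseteq> B"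
  proof clarify
    fix x u assume xu: "(x, u) \<in> Nor C" "x \<in> T"
    obtain s where s: "0 < s" "unique_nearest C (x + s *\<^sub>R u) x" using Nor_D(3)[OF xu(1)] by blast
    obtain k where "inverse (real (Suc k)) < s" using reals_Archimedean s(1) by blast
    then have "(x, u) \<in> reach_at_least C (1 / Suc k)"
      using unique_nearest_ray_segment[OF s(2)] by (simp add: reach_at_least_def inverse_eq_divide)
    then show "(x, u) \<in> B" using xu(2) by (auto simp: B_def \<Phi>_def)
  qed
  moreover have "UNIV - S \<in> sets borel" using S(1) by auto
  then have "B \<in> null_sets ?P \<and> B \<in> null_sets ?N"
    using null[OF S(1)] null[of "UNIV - S"] S unfolding B_def by (intro conjI null_sets.Un null_sets_UN; simp)
  ultimately show ?thesis using sets by (intro bexI[of _ B]) (auto simp: null_sets_def)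
qed

lemma normal_decomposition_tendsto:
  fixes F1 F2 :: "'a::euclidean_space set"
  assumes nd: "normal_decomposition F1 F2" and A: "\<And>e. A e \<in> sets lborel"
    and sub: "\<And>e. A e \<subseteq> par_set (frontier (F1 \<union> F2)) e \<inter> par_set (frontier F1) e \<inter> par_set (frontier F2) e"
  shows "((\<lambda>e. measure lborel (A e) / e) \<longlongrightarrow> 0) (at_right 0)"
proof (rule tendsto_measure_ratio_subset[OF A _ sub])
  have "compact F1" "compact F2" using nd unfolding normal_decomposition_def solid_def by blast+
  then show "compact (par_set (frontier (F1 \<union> F2)) e \<inter> par_set (frontier F1) e \<inter> par_set (frontier F2) e)"
    for e by (intro compact_Int compact_par_set compact_frontier compact_Un)
  show "((\<lambda>e. measure lborel (par_set (frontier (F1 \<union> F2)) e \<inter> par_set (frontier F1) e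
      \<inter> par_set (frontier F2) e) / e) \<longlongrightarrow> 0) (at_right 0)"
    using nd unfolding normal_decomposition_def by blast
qed

theorem lemma7:
  fixes F1 F2 :: "'a::euclidean_space set"
  assumes "normal_decomposition F1 F2"
  shows "(\<forall>\<Theta>. support_measures (frontier F1 \<union> frontier F2) \<Theta> \<longrightarrow>
            (\<exists>B\<in>sets borel.
               {(x, u) \<in> Nor (frontier F1 \<union> frontier F2).
                   x \<in> frontier (F1 \<union> F2) \<inter> frontier F1 \<inter> frontier F2} \<subseteq> B \<and>
               emeasure (fst (\<Theta> (DIM('a) - 1))) B = 0 \<and>
               emeasure (snd (\<Theta> (DIM('a) - 1))) B = 0))
       \<and> ((\<lambda>\<epsilon>. measure lborel
              (par_set ((frontier F1 - frontier F2) \<union> (frontier F2 - frontier F1)) \<epsilon>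
               \<inter> par_set (frontier F1 \<inter> frontier F2) \<epsilon>) / \<epsilon>) \<longlongrightarrow> 0) (at_right 0)
       \<and> ((\<lambda>\<epsilon>. measure lborel
              ((par_set (frontier F1) \<epsilon> \<inter> par_set (frontier F2) \<epsilon>)
               - par_set (frontier F1 \<inter> frontier F2) \<epsilon>) / \<epsilon>) \<longlongrightarrow> 0) (at_right 0)"
proof -
  have "compact F1" "compact F2" and int: "F1 \<inter> F2 \<subseteq> frontier F1 \<inter> frontier F2"
    using assms unfolding normal_decomposition_def solid_def by blast+
  then have closed: "closed F1" "closed F2" by (simp_all add: compact_imp_closed)
  have d12: "frontier F1 - frontier F2 \<subseteq> frontier (F1 \<union> F2)"
    using int by (intro frontier_diff_subset_frontier_Un closed) blast
  have "F2 \<inter> F1 \<subseteq> frontier F1" using int by blast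
  from frontier_diff_subset_frontier_Un[OF closed(2,1) this]
  have d21: "frontier F2 - frontier F1 \<subseteq> frontier (F1 \<union> F2)" by (simp add: Un_commute)
  let ?T = "frontier (F1 \<union> F2) \<inter> frontier F1 \<inter> frontier F2"
  have "par_set ?T e \<subseteq> par_set (frontier (F1 \<union> F2)) e \<inter> par_set (frontier F1) e \<inter> par_set (frontier F2) e"
    for e using par_set_mono[of ?T] by blast
  then have lim_T: "((\<lambda>e. measure lborel (par_set ?T e) / e) \<longlongrightarrow> 0) (at_right 0)"
    by (intro normal_decomposition_tendsto[OF assms]) (simp_all add: borel_closed closed_par_set)
  have "compact (frontier F1 \<union> frontier F2)" "compact ?T"
    using \<open>compact F1\<close> \<open>compact F2\<close> by (simp_all add: compact_Un compact_Int compact_frontier)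
  with par_set_sym_diff_Int_subset[OF d12 d21] par_set_Int_diff_subset[OF frontier_closed d12]
  show ?thesis
    by (intro conjI allI impI support_measure_top_null[OF _ _ _ lim_T]
        normal_decomposition_tendsto[OF assms])
      (simp_all add: borel_closed closed_par_set closed_Int closed_Diff)
qed

end
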